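(* Let $1\to K\to G\xrightarrow{p} Q\to 1$ be an exact sequence of groups (so $p:G\to Q$ is a surjection with kernel $K$), and assume every non-trivial element of $K$ is a generalized torsion element of $G$. Then a non-trivial element $g\in G$ is a generalized torsion element of $G$ if and only if either $p(g)=1$ or $p(g)$ is a generalized torsion element of $Q$.
   Context: For $g,x$ in a group, $g^{x}:=xgx^{-1}$. A non-trivial element $g$ of a group $G$ is a generalized torsion element (of $G$) if there exist a positive integer $n$ and $x_1,\ldots,x_n\in G$ with $g^{x_1}g^{x_2}\cdots g^{x_n}=1$. *)

theory Defs
  imports "HOL-Algebra.Algebra"
begin

definition conjg :: "('a, 'm) monoid_scheme \<Rightarrow> 'a \<Rightarrow> 'a \<Rightarrow> 'a" where
  "conjg G g x = x \<otimes>\<^bsub>G\<^esub> g \<otimes>\<^bsub>G\<^esub> inv\<^bsub>G\<^esub> x"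

definition conj_prod :: "('a, 'm) monoid_scheme \<Rightarrow> 'a \<Rightarrow> 'a list \<Rightarrow> 'a" where
  "conj_prod G g xs = foldr (\<lambda>x acc. conjg G g x \<otimes>\<^bsub>G\<^esub> acc) xs \<one>\<^bsub>G\<^esub>"

definition gen_torsion :: "('a, 'm) monoid_scheme \<Rightarrow> 'a \<Rightarrow> bool" where
  "gen_torsion G g \<longleftrightarrow> g \<in> carrier G \<and> g \<noteq> \<one>\<^bsub>G\<^esub> \<and>
     (\<exists>xs. xs \<noteq> [] \<and> set xs \<subseteq> carrier G \<and> conj_prod G g xs = \<one>\<^bsub>G\<^esub>)"

end

theory Submission
  imports Defs
begin

(* If p g is a generalized torsion element of Q, lift the conjugators of a witnessing product to
   G: the corresponding product k of conjugates of g lies in K. Either k = 1, or k is itself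
   generalized torsion, and a product of conjugates of k is again a product of conjugates of g,
   the conjugators being the pairwise products z x. The converse holds for any homomorphism,
   which maps products of conjugates to products of conjugates. *)

context group
begin

lemma conjg_closed: "g \<in> carrier G \<Longrightarrow> x \<in> carrier G \<Longrightarrow> conjg G g x \<in> carrier G"
  by (simp add: conjg_def)

lemma conjg_one: "z \<in> carrier G \<Longrightarrow> conjg G \<one> z = \<one>"
  by (simp add: conjg_def)

lemma conjg_mult:
  "a \<in> carrier G \<Longrightarrow> b \<in> carrier G \<Longrightarrow> z \<in> carrier G \<Longrightarrow>
   conjg G (a \<otimes> b) z = conjg G a z \<otimes> conjg G b z"
  by (simp add: conjg_def m_assoc flip: m_assoc[of "inv z" z])

lemma conjg_conjg:
  "g \<in> carrier G \<Longrightarrow> x \<in> carrier G \<Longrightarrow> z \<in> carrier G \<Longrightarrow>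
   conjg G (conjg G g x) z = conjg G g (z \<otimes> x)"
  by (simp add: conjg_def m_assoc inv_mult_group)

lemma conj_prod_Nil [simp]: "conj_prod G g [] = \<one>"
  by (simp add: conj_prod_def)

lemma conj_prod_Cons [simp]: "conj_prod G g (x # xs) = conjg G g x \<otimes> conj_prod G g xs"
  by (simp add: conj_prod_def)

lemma conj_prod_closed:
  "g \<in> carrier G \<Longrightarrow> set xs \<subseteq> carrier G \<Longrightarrow> conj_prod G g xs \<in> carrier G"
  by (induction xs) (auto simp: conjg_closed)

lemma conj_prod_append:
  "g \<in> carrier G \<Longrightarrow> set xs \<subseteq> carrier G \<Longrightarrow> set ys \<subseteq> carrier G \<Longrightarrow>
   conj_prod G g (xs @ ys) = conj_prod G g xs \<otimes> conj_prod G g ys"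
  by (induction xs) (auto simp: conjg_closed conj_prod_closed m_assoc)

lemma conjg_conj_prod:
  "g \<in> carrier G \<Longrightarrow> set xs \<subseteq> carrier G \<Longrightarrow> z \<in> carrier G \<Longrightarrow>
   conjg G (conj_prod G g xs) z = conj_prod G g (map (\<lambda>x. z \<otimes> x) xs)"
  by (induction xs) (auto simp: conjg_one conjg_mult conjg_closed conj_prod_closed conjg_conjg)

lemma conj_prod_conj_prod:
  assumes "g \<in> carrier G" "set xs \<subseteq> carrier G" "set zs \<subseteq> carrier G"
  shows "conj_prod G (conj_prod G g xs) zs = conj_prod G g [z \<otimes> x. z \<leftarrow> zs, x \<leftarrow> xs]"
  using assms(3)
proof (induction zs)
  case (Cons z zs)
  have "set (map (\<lambda>x. z \<otimes> x) xs) \<subseteq> carrier G" "set [z \<otimes> x. z \<leftarrow> zs, x \<leftarrow> xs] \<subseteq> carrier G"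
    using Cons.prems assms(2) by auto
  with Cons assms(1,2) show ?case
    by (simp add: conjg_conj_prod conj_prod_append del: set_concat set_map)
qed simp

lemma gen_torsion_if_conj_prod_gen_torsion:
  assumes "g \<in> carrier G" "g \<noteq> \<one>" "xs \<noteq> []" "set xs \<subseteq> carrier G"
    and "gen_torsion G (conj_prod G g xs)"
  shows "gen_torsion G g"
proof -
  obtain zs where zs: "zs \<noteq> []" "set zs \<subseteq> carrier G" "conj_prod G (conj_prod G g xs) zs = \<one>"
    using assms(5) unfolding gen_torsion_def by auto
  let ?ws = "[z \<otimes> x. z \<leftarrow> zs, x \<leftarrow> xs]"
  have "conj_prod G g ?ws = \<one>"
    using zs(3) conj_prod_conj_prod[OF assms(1,4) zs(2)] by simp
  moreover have "set ?ws \<subseteq> carrier G" "?ws \<noteq> []"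
    using assms(3,4) zs(1,2) by (auto simp: neq_Nil_conv)
  ultimately show ?thesis
    using assms(1,2) unfolding gen_torsion_def by blast
qed

end

context group_hom
begin

lemma hom_conj_prod:
  "g \<in> carrier G \<Longrightarrow> set xs \<subseteq> carrier G \<Longrightarrow> h (conj_prod G g xs) = conj_prod H (h g) (map h xs)"
  by (induction xs) (auto simp: G.conj_prod_closed conjg_def)

lemma gen_torsion_image:
  assumes "gen_torsion G g" "h g \<noteq> \<one>\<^bsub>H\<^esub>"
  shows "gen_torsion H (h g)"
proof -
  obtain xs where xs: "xs \<noteq> []" "set xs \<subseteq> carrier G" "conj_prod G g xs = \<one>"
    using assms(1) unfolding gen_torsion_def by auto
  have "conj_prod H (h g) (map h xs) = \<one>\<^bsub>H\<^esub>"
    using assms(1) xs by (simp add: gen_torsion_def flip: hom_conj_prod)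
  moreover have "h g \<in> carrier H" "set (map h xs) \<subseteq> carrier H"
    using assms(1) xs(2) by (auto simp: gen_torsion_def)
  ultimately show ?thesis
    using assms(2) xs(1) unfolding gen_torsion_def by blast
qed

lemma conj_prod_in_kernel_if_image_gen_torsion:
  assumes "h ` carrier G = carrier H" "g \<in> carrier G" "gen_torsion H (h g)"
  obtains xs where "xs \<noteq> []" "set xs \<subseteq> carrier G" "conj_prod G g xs \<in> kernel G H h"
proof -
  obtain ys where ys: "ys \<noteq> []" "set ys \<subseteq> carrier H" "conj_prod H (h g) ys = \<one>\<^bsub>H\<^esub>"
    using assms(3) unfolding gen_torsion_def by auto
  have "ys \<in> lists (h ` carrier G)"
    using ys(2) assms(1) by auto
  then obtain xs where xs: "set xs \<subseteq> carrier G" "map h xs = ys"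
    unfolding lists_image by auto
  then have "conj_prod G g xs \<in> kernel G H h"
    using ys(3) assms(2) by (simp add: kernel_def G.conj_prod_closed hom_conj_prod)
  with that xs ys(1) show ?thesis by auto
qed

end

theorem theorem1p4:
  fixes G :: "('a, 'm) monoid_scheme" and Q :: "('b, 'n) monoid_scheme"
    and p :: "'a \<Rightarrow> 'b" and g :: 'a
  assumes "group G" and "group Q"
    and "p \<in> hom G Q" and "p ` carrier G = carrier Q"
    and "\<And>k. k \<in> kernel G Q p \<Longrightarrow> k \<noteq> \<one>\<^bsub>G\<^esub> \<Longrightarrow> gen_torsion G k"
    and "g \<in> carrier G" and "g \<noteq> \<one>\<^bsub>G\<^esub>"
  shows "gen_torsion G g \<longleftrightarrow> (p g = \<one>\<^bsub>Q\<^esub> \<or> gen_torsion Q (p g))"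
proof
  interpret group_hom G Q p
    using assms(1-3) by (simp add: group_hom_def group_hom_axioms_def)
  show "gen_torsion G g \<Longrightarrow> p g = \<one>\<^bsub>Q\<^esub> \<or> gen_torsion Q (p g)"
    using gen_torsion_image by blast
  assume "p g = \<one>\<^bsub>Q\<^esub> \<or> gen_torsion Q (p g)"
  then consider (kernel) "g \<in> kernel G Q p" | (image_torsion) "gen_torsion Q (p g)"
    using assms(6) unfolding kernel_def by blast
  then show "gen_torsion G g"
  proof cases
    case kernel
    then show ?thesis using assms(5,7) by blast
  next
    case image_torsion
    then obtain xs where xs: "xs \<noteq> []" "set xs \<subseteq> carrier G" "conj_prod G g xs \<in> kernel G Q p"
      using conj_prod_in_kernel_if_image_gen_torsion assms(4,6) by metis
    show ?thesis
    proof (cases "conj_prod G g xs = \<one>\<^bsub>G\<^esub>")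
      case True
      with xs(1,2) assms(6,7) show ?thesis unfolding gen_torsion_def by blast
    next
      case False
      with xs assms(5,6,7) show ?thesis by (blast intro: G.gen_torsion_if_conj_prod_gen_torsion)
    qed
  qed
qed

end
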